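(* For every $\delta\in\mathbb R$, $$\mathrm{tr}(F_A\wedge Q^\delta_-+Q^\delta_-\wedge F_A)=0,\qquad \mathrm{tr}(F_A\wedge Q^\delta_++Q^\delta_+\wedge F_A)=0,\qquad \mathrm{tr}(F_A\wedge Q_0+Q_0\wedge F_A)=0.$$ Consequently $\mathrm{tr}(F_A\wedge Q^\delta_m+Q^\delta_m\wedge F_A)=0$ for all $\delta,m\in\mathbb R$, where $Q^\delta_m=(1-\delta+m)Q^\delta_-+(1+\delta)Q^\delta_++\delta^2Q_0$.
   Context: Let $(V,g_V,\omega,\Omega)$ be a Calabi–Yau 3-orbifold and $\pi:K\to V$ a non-trivial principal $S^1$-(orbi)bundle with connection 1-form $\eta$, $d\eta=\pi^*\omega$; pullbacks are suppressed. Locally use a coframe $e_0=\epsilon\eta,e_1,e_2,e_3,Je_1,Je_2,Je_3$ ($\epsilon>0$), with $e_i,Je_i$ pulled back from a local $\mathrm{SU}(3)$-coframe on $V$ such that $\omega=\sum_i e_i\wedge Je_i$ and $\Omega=(e_1+iJe_1)\wedge(e_2+iJe_2)\wedge(e_3+iJe_3)$; $e=(e_1,e_2,e_3)^{T}$, $Je=(Je_1,Je_2,Je_3)^{T}$, $I$ the $3\times3$ identity. For a column $x=(x_1,x_2,x_3)^T$ of 1-forms, $[x]$ is the matrix with rows $(0,x_3,-x_2),(-x_3,0,x_1),(x_2,-x_1,0)$; for columns $x,y$, $x\times y=(x_2\wedge y_3-x_3\wedge y_2,\ x_3\wedge y_1-x_1\wedge y_3,\ x_1\wedge y_2-x_2\wedge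 y_1)^T$; $e\wedge Je^T$ is the matrix with entries $e_i\wedge Je_j$, etc. The pulled-back Levi-Civita connection of $g_V$ satisfies $de=-a\wedge e-b\wedge Je$, $d(Je)=b\wedge e-a\wedge Je$ ($a$ skew, $b$ symmetric traceless matrices of 1-forms); in $7\times7$ block form w.r.t. $(e_0,e,Je)$, $A=\begin{pmatrix}0&0&0\\0&a&b\\0&-b&a\end{pmatrix}$ and $F_A=dA+A\wedge A=\begin{pmatrix}0&0&0\\0&\alpha&\beta\\0&-\beta&\alpha\end{pmatrix}$ ($\alpha$ skew, $\beta$ symmetric traceless matrices of 2-forms). Further $Q^\delta_-=e_0\wedge\begin{pmatrix}0&(1+\delta)e^T&(1+\delta)Je^T\\-(1+\delta)e&-2\delta[Je]&-2\delta[e]\\-(1+\delta)Je&-2\delta[e]&2\delta[Je]\end{pmatrix}$, $Q^\delta_+=\begin{pmatrix}0&2\delta(e\times Je)^T&\delta(e\times e-Je\times Je)^T\\-2\delta(e\times Je)&-(1+\delta)Je\wedge Je^T&(1+\delta)Je\wedge e^T\\-\delta(e\times e-Je\times Je)&(1+\delta)e\wedge Je^T&-(1+\delta)e\wedge e^T\end{pmatrix}$, $Q_0=\frac12\begin{pmatrix}0&0&0\\0&-[e\times e+Je\times Je]&-2([e]\wedge[Je]-[Je]\wedge[e])\\0&2([e]\wedge[Je]-[Je]\wedge[e])&-[e\times e+Je\times Je]\end{pmatrix}$. Products of matrices of forms use the wedge product, and $\mathrm{tr}(X\wedge Y)=\sum_{i,j}X_{ij}\wedge Y_{ji}$. *)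

theory Defs
  imports Complex_Main
begin

text \<open>Pointwise model of the exterior algebra of the 7-dimensional space spanned by the
coframe (e_0, e_1, e_2, e_3, Je_1, Je_2, Je_3).  A form is given by its coefficients with
respect to the basis  dx_S = dx_{s_1} wedge ... wedge dx_{s_k}  (s_1 < ... < s_k), S a finite
set of indices; index 0 is e_0, indices 1,2,3 are e_1,e_2,e_3 and 4,5,6 are Je_1,Je_2,Je_3.\<close>

type_synonym form = "nat set \<Rightarrow> real"
type_synonym fmat = "nat \<Rightarrow> nat \<Rightarrow> form"
type_synonym fvec = "nat \<Rightarrow> form"

definition fzero :: form where "fzero = (\<lambda>S. 0)"
definition fadd :: "form \<Rightarrow> form \<Rightarrow> form" where "fadd a b = (\<lambda>S. a S + b S)"
definition fneg :: "form \<Rightarrow> form" where "fneg a = (\<lambda>S. - a S)"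
definition fscale :: "real \<Rightarrow> form \<Rightarrow> form" where "fscale c a = (\<lambda>S. c * a S)"
definition fsum :: "('i \<Rightarrow> form) \<Rightarrow> 'i set \<Rightarrow> form" where
  "fsum f I = (\<lambda>S. \<Sum>i\<in>I. f i S)"

text \<open>Wedge product: the coefficient of dx_S in a wedge b is the sum over A \<subseteq> S of
sign(A, S-A) * a_A * b_{S-A}, the sign being that of the shuffle putting A before S-A.\<close>
definition fwedge :: "form \<Rightarrow> form \<Rightarrow> form" where
  "fwedge a b = (\<lambda>S. if finite S then
     (\<Sum>A\<in>Pow S. (-1::real) ^ card {(p,q). p \<in> A \<and> q \<in> S - A \<and> q < p} * a A * b (S - A))
   else 0)"

definition dx :: "nat \<Rightarrow> form" where "dx i = (\<lambda>S. if S = {i} then 1 else 0)"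

definition e0 :: form where "e0 = dx 0"
definition ev :: fvec where "ev i = dx (Suc i)"          (* e_{i+1},  i = 0,1,2 *)
definition Jev :: fvec where "Jev i = dx (i + 4)"        (* Je_{i+1}, i = 0,1,2 *)

text \<open>A 2-form pulled back from V: only components dx_S with S a 2-subset of {1..6}.\<close>
definition horiz_2form :: "form \<Rightarrow> bool" where
  "horiz_2form f \<longleftrightarrow> (\<forall>S. f S \<noteq> 0 \<longrightarrow> S \<subseteq> {1..6} \<and> card S = 2)"

definition bracket :: "fvec \<Rightarrow> fmat" where
  "bracket x i j = [[fzero, x 2, fneg (x 1)], [fneg (x 2), fzero, x 0], [x 1, fneg (x 0), fzero]] ! i ! j"

definition cross :: "fvec \<Rightarrow> fvec \<Rightarrow> fvec" where
  "cross x y i = [fadd (fwedge (x 1) (y 2)) (fneg (fwedge (x 2) (y 1))),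
                  fadd (fwedge (x 2) (y 0)) (fneg (fwedge (x 0) (y 2))),
                  fadd (fwedge (x 0) (y 1)) (fneg (fwedge (x 1) (y 0)))] ! i"

definition vadd :: "fvec \<Rightarrow> fvec \<Rightarrow> fvec" where "vadd x y i = fadd (x i) (y i)"
definition vscale :: "real \<Rightarrow> fvec \<Rightarrow> fvec" where "vscale c x i = fscale c (x i)"

definition outer :: "fvec \<Rightarrow> fvec \<Rightarrow> fmat" where "outer x y i j = fwedge (x i) (y j)"
definition mwedge3 :: "fmat \<Rightarrow> fmat \<Rightarrow> fmat" where
  "mwedge3 X Y i j = fsum (\<lambda>k. fwedge (X i k) (Y k j)) {..<3}"
definition madd :: "fmat \<Rightarrow> fmat \<Rightarrow> fmat" where "madd X Y i j = fadd (X i j) (Y i j)"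
definition mscale :: "real \<Rightarrow> fmat \<Rightarrow> fmat" where "mscale c X i j = fscale c (X i j)"
definition mneg :: "fmat \<Rightarrow> fmat" where "mneg X i j = fneg (X i j)"
definition mzero :: fmat where "mzero i j = fzero"

text \<open>Blocks of a 7x7 matrix w.r.t. (e_0, e, Je): a 1x1 block, 1x3 rows, 3x1 columns, 3x3 blocks.\<close>
definition rowb :: "fvec \<Rightarrow> fmat" where "rowb v k l = v l"
definition colb :: "fvec \<Rightarrow> fmat" where "colb v k l = v k"

definition blkidx :: "nat \<Rightarrow> nat \<times> nat" where
  "blkidx i = (if i = 0 then (0, 0) else if i \<le> 3 then (1, i - 1) else (2, i - 4))"

definition blk :: "fmat \<Rightarrow> fmat \<Rightarrow> fmat \<Rightarrow> fmat \<Rightarrow> fmat \<Rightarrow> fmat \<Rightarrow> fmat \<Rightarrow> fmat \<Rightarrow> fmat \<Rightarrow> fmat" where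
  "blk b00 b01 b02 b10 b11 b12 b20 b21 b22 i j =
     ([[b00, b01, b02], [b10, b11, b12], [b20, b21, b22]] ! fst (blkidx i) ! fst (blkidx j))
       (snd (blkidx i)) (snd (blkidx j))"

definition madd7 :: "fmat \<Rightarrow> fmat \<Rightarrow> fmat" where "madd7 X Y i j = fadd (X i j) (Y i j)"
definition mscale7 :: "real \<Rightarrow> fmat \<Rightarrow> fmat" where "mscale7 c X i j = fscale c (X i j)"

definition trw :: "fmat \<Rightarrow> fmat \<Rightarrow> form" where
  "trw X Y = fsum (\<lambda>i. fsum (\<lambda>j. fwedge (X i j) (Y j i)) {..<7}) {..<7}"

definition FA :: "fmat \<Rightarrow> fmat \<Rightarrow> fmat" where
  "FA \<alpha> \<beta> = blk mzero mzero mzero mzero \<alpha> \<beta> mzero (mneg \<beta>) \<alpha>"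

definition Qminus :: "real \<Rightarrow> fmat" where
  "Qminus \<delta> = (\<lambda>i j. fwedge e0
     (blk mzero (rowb (vscale (1 + \<delta>) ev)) (rowb (vscale (1 + \<delta>) Jev))
          (colb (vscale (-(1 + \<delta>)) ev)) (mscale (-2 * \<delta>) (bracket Jev)) (mscale (-2 * \<delta>) (bracket ev))
          (colb (vscale (-(1 + \<delta>)) Jev)) (mscale (-2 * \<delta>) (bracket ev)) (mscale (2 * \<delta>) (bracket Jev)) i j))"

definition Qplus :: "real \<Rightarrow> fmat" where
  "Qplus \<delta> = (let c1 = cross ev Jev; c2 = vadd (cross ev ev) (vscale (-1) (cross Jev Jev)) in
     blk mzero (rowb (vscale (2 * \<delta>) c1)) (rowb (vscale \<delta> c2))
         (colb (vscale (-2 * \<delta>) c1)) (mscale (-(1 + \<delta>)) (outer Jev Jev)) (mscale (1 + \<delta>) (outer Jev ev))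
         (colb (vscale (-\<delta>) c2)) (mscale (1 + \<delta>) (outer ev Jev)) (mscale (-(1 + \<delta>)) (outer ev ev)))"

definition Qzero :: fmat where
  "Qzero = (let s = vadd (cross ev ev) (cross Jev Jev);
               C = madd (mwedge3 (bracket ev) (bracket Jev)) (mneg (mwedge3 (bracket Jev) (bracket ev))) in
     mscale7 (1/2) (blk mzero mzero mzero
                       mzero (mneg (bracket s)) (mscale (-2) C)
                       mzero (mscale 2 C) (mneg (bracket s))))"

definition Qm :: "real \<Rightarrow> real \<Rightarrow> fmat" where
  "Qm \<delta> m = madd7 (mscale7 (1 - \<delta> + m) (Qminus \<delta>))
               (madd7 (mscale7 (1 + \<delta>) (Qplus \<delta>)) (mscale7 (\<delta>^2) Qzero))"

definition trFQ :: "fmat \<Rightarrow> fmat \<Rightarrow> fmat \<Rightarrow> form" where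
  "trFQ \<alpha> \<beta> Q = fadd (trw (FA \<alpha> \<beta>) Q) (trw Q (FA \<alpha> \<beta>))"

end

theory Submission
  imports Defs
begin

text \<open>The entries of
\<open>\<alpha>\<close> and \<open>\<beta>\<close> are 2-forms and hence commute with every form, which lets the traces be
expanded into a normal form in the coframe.  Then the \<open>Q\<^sup>\<delta>\<^sub>-\<close> trace cancels blockwise,
the \<open>Q\<^sup>\<delta>\<^sub>+\<close> trace is \<open>2(1+\<delta>)\<close> times a pairing of the coframe with the two first Bianchi
identities \<open>\<alpha>\<wedge>e + \<beta>\<wedge>Je = 0\<close>, \<open>\<beta>\<wedge>e - \<alpha>\<wedge>Je = 0\<close>, and the \<open>Q\<^sub>0\<close> trace is four times that
pairing minus \<open>8 tr \<beta> \<wedge> \<omega>\<close>, which vanishes as \<open>\<beta>\<close> is traceless.\<close>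

definition inversions :: "nat set \<Rightarrow> nat set \<Rightarrow> (nat \<times> nat) set" where
  "inversions A B = {(p, q). p \<in> A \<and> q \<in> B \<and> q < p}"

definition shuffle_sign :: "nat set \<Rightarrow> nat set \<Rightarrow> real" where
  "shuffle_sign A B = (-1) ^ card (inversions A B)"

lemma fwedge_eq:
  "fwedge a b S = (if finite S then (\<Sum>A\<in>Pow S. shuffle_sign A (S - A) * a A * b (S - A)) else 0)"
  unfolding fwedge_def shuffle_sign_def inversions_def by simp

lemma finite_inversions: "finite A \<Longrightarrow> finite (inversions A B)"
  unfolding inversions_def by (rule finite_subset[of _ "A \<times> (\<Union>p\<in>A. {..<p})"]) auto

lemma shuffle_sign_Un_left:
  assumes "finite A" "finite C" "A \<inter> C = {}"
  shows "shuffle_sign (A \<union> C) D = shuffle_sign A D * shuffle_sign C D"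
proof -
  have "inversions (A \<union> C) D = inversions A D \<union> inversions C D"
    and "inversions A D \<inter> inversions C D = {}"
    using assms(3) unfolding inversions_def by auto
  then show ?thesis
    using assms finite_inversions by (simp add: shuffle_sign_def card_Un_disjoint power_add)
qed

lemma shuffle_sign_Un_right:
  assumes "finite A" "C \<inter> D = {}"
  shows "shuffle_sign A (C \<union> D) = shuffle_sign A C * shuffle_sign A D"
proof -
  have "inversions A (C \<union> D) = inversions A C \<union> inversions A D"
    and "inversions A C \<inter> inversions A D = {}"
    using assms(2) unfolding inversions_def by auto
  then show ?thesis
    using assms finite_inversions by (simp add: shuffle_sign_def card_Un_disjoint power_add)
qed

lemma card_inversions_swap:
  assumes "finite A" "finite D" "A \<inter> D = {}"
  shows "card (inversions A D) + card (inversions D A) = card A * card D"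
proof -
  let ?flip = "\<lambda>(x, y). (y, x)"
  have "A \<times> D = inversions A D \<union> ?flip ` inversions D A"
    using assms(3) unfolding inversions_def by (auto simp: image_iff)
  moreover have "inversions A D \<inter> ?flip ` inversions D A = {}"
    unfolding inversions_def by auto
  moreover have "card (?flip ` inversions D A) = card (inversions D A)"
    by (rule card_image) (auto simp: inj_on_def)
  ultimately show ?thesis
    using assms finite_inversions by (metis card_Un_disjoint card_cartesian_product finite_imageI)
qed

lemma shuffle_sign_swap:
  assumes "finite A" "finite D" "A \<inter> D = {}"
  shows "shuffle_sign A D = (-1) ^ (card A * card D) * shuffle_sign D A"
proof -
  have "(-1::real) ^ (card A * card D) * shuffle_sign D A
      = shuffle_sign A D * ((-1) ^ card (inversions D A) * (-1) ^ card (inversions D A))"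
    unfolding card_inversions_swap[OF assms, symmetric]
    by (simp add: shuffle_sign_def power_add mult_ac)
  also have "(-1::real) ^ card (inversions D A) * (-1) ^ card (inversions D A) = 1"
    by (simp add: power_add[symmetric] mult_2[symmetric])
  finally show ?thesis by simp
qed

lemma shuffle_sign_cocycle:
  assumes "finite S" "A \<subseteq> B" "B \<subseteq> S"
  shows "shuffle_sign B (S - B) * shuffle_sign A (B - A)
       = shuffle_sign A (S - A) * shuffle_sign (B - A) (S - A - (B - A))"
proof -
  have "finite B"
    using assms(1,3) by (rule finite_subset[rotated])
  then have fin: "finite A" "finite (B - A)"
    using assms(2) finite_subset by auto
  have split: "B = A \<union> (B - A)" "S - A = (B - A) \<union> (S - B)" "S - A - (B - A) = S - B"
    using assms by auto
  have "shuffle_sign B (S - B) = shuffle_sign A (S - B) * shuffle_sign (B - A) (S - B)"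
    using shuffle_sign_Un_left[of A "B - A" "S - B"] fin split(1) by auto
  moreover have "shuffle_sign A (S - A) = shuffle_sign A (B - A) * shuffle_sign A (S - B)"
    using shuffle_sign_Un_right[of A "B - A" "S - B"] fin split(2) by auto
  ultimately show ?thesis
    using split(3) by (simp add: mult_ac)
qed

lemma fwedge_fwedge_left_eq:
  assumes "finite S"
  shows "fwedge (fwedge a b) c S = (\<Sum>(B, A)\<in>Sigma (Pow S) Pow.
           shuffle_sign B (S - B) * shuffle_sign A (B - A) * a A * b (B - A) * c (S - B))"
proof -
  have "fwedge (fwedge a b) c S = (\<Sum>B\<in>Pow S. \<Sum>A\<in>Pow B.
           shuffle_sign B (S - B) * shuffle_sign A (B - A) * a A * b (B - A) * c (S - B))"
    using assms
    by (auto simp: fwedge_eq[of "fwedge a b"] fwedge_eq[of a] sum_distrib_left sum_distrib_right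
        mult_ac intro!: sum.cong dest: finite_subset)
  also have "\<dots> = (\<Sum>(B, A)\<in>Sigma (Pow S) Pow.
           shuffle_sign B (S - B) * shuffle_sign A (B - A) * a A * b (B - A) * c (S - B))"
    using assms by (subst sum.Sigma) (auto intro: finite_subset)
  finally show ?thesis .
qed

lemma fwedge_fwedge_right_eq:
  assumes "finite S"
  shows "fwedge a (fwedge b c) S = (\<Sum>(A, C)\<in>Sigma (Pow S) (\<lambda>A. Pow (S - A)).
           shuffle_sign A (S - A) * shuffle_sign C (S - A - C) * a A * b C * c (S - A - C))"
proof -
  have "fwedge a (fwedge b c) S = (\<Sum>A\<in>Pow S. \<Sum>C\<in>Pow (S - A).
           shuffle_sign A (S - A) * shuffle_sign C (S - A - C) * a A * b C * c (S - A - C))"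
    using assms
    by (auto simp: fwedge_eq[of a] fwedge_eq[of b] sum_distrib_left mult_ac intro!: sum.cong)
  also have "\<dots> = (\<Sum>(A, C)\<in>Sigma (Pow S) (\<lambda>A. Pow (S - A)).
           shuffle_sign A (S - A) * shuffle_sign C (S - A - C) * a A * b C * c (S - A - C))"
    using assms by (subst sum.Sigma) auto
  finally show ?thesis .
qed

lemma fwedge_assoc: "fwedge (fwedge a b) c = fwedge a (fwedge b c)"
proof
  fix S :: "nat set"
  show "fwedge (fwedge a b) c S = fwedge a (fwedge b c) S"
  proof (cases "finite S")
    case False
    then show ?thesis by (simp add: fwedge_eq)
  next
    case fin: True
    have "(\<Sum>(B, A)\<in>Sigma (Pow S) Pow.
             shuffle_sign B (S - B) * shuffle_sign A (B - A) * a A * b (B - A) * c (S - B))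
        = (\<Sum>(A, C)\<in>Sigma (Pow S) (\<lambda>A. Pow (S - A)).
             shuffle_sign A (S - A) * shuffle_sign C (S - A - C) * a A * b C * c (S - A - C))"
    proof (rule sum.reindex_bij_witness[of _ "\<lambda>(A, C). (A \<union> C, A)" "\<lambda>(B, A). (A, B - A)"])
      fix x assume x: "x \<in> Sigma (Pow S) Pow"
      obtain B A where xBA: "x = (B, A)" by (cases x)
      have "S - A - (B - A) = S - B" using x xBA by auto
      then show "(case (case x of (B, A) \<Rightarrow> (A, B - A)) of (A, C) \<Rightarrow>
                   shuffle_sign A (S - A) * shuffle_sign C (S - A - C) * a A * b C * c (S - A - C))
               = (case x of (B, A) \<Rightarrow>
                   shuffle_sign B (S - B) * shuffle_sign A (B - A) * a A * b (B - A) * c (S - B))"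
        using shuffle_sign_cocycle[of S A B] fin x xBA by auto
    qed auto
    then show ?thesis
      using fin by (simp add: fwedge_fwedge_left_eq fwedge_fwedge_right_eq)
  qed
qed

lemma fwedge_commute_graded:
  assumes degrees: "\<And>A D. a A \<noteq> 0 \<Longrightarrow> b D \<noteq> 0 \<Longrightarrow> (-1::real) ^ (card A * card D) = c"
  shows "fwedge a b = fscale c (fwedge b a)"
proof
  fix S :: "nat set"
  show "fwedge a b S = fscale c (fwedge b a) S"
  proof (cases "finite S")
    case False
    then show ?thesis by (simp add: fwedge_eq fscale_def)
  next
    case fin: True
    have "fwedge b a S = (\<Sum>A\<in>Pow S. shuffle_sign (S - A) (S - (S - A)) * b (S - A) * a (S - (S - A)))"
      unfolding fwedge_eq[of b] if_P[OF fin]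
      by (rule sum.reindex_bij_witness[of _ "\<lambda>A. S - A" "\<lambda>A. S - A"]) (auto simp: double_diff)
    also have "\<dots> = (\<Sum>A\<in>Pow S. shuffle_sign (S - A) A * b (S - A) * a A)"
      by (rule sum.cong) (auto simp: Diff_Diff_Int Int_absorb1)
    finally have ba: "fwedge b a S = \<dots>" .
    have "shuffle_sign A (S - A) * a A * b (S - A) = c * (shuffle_sign (S - A) A * b (S - A) * a A)"
      if "A \<subseteq> S" for A
    proof (cases "a A = 0 \<or> b (S - A) = 0")
      case False
      then have "(-1::real) ^ (card A * card (S - A)) = c" using degrees by auto
      then show ?thesis
        using shuffle_sign_swap[of A "S - A"] fin that finite_subset by auto
    qed auto
    then have "fwedge a b S = (\<Sum>A\<in>Pow S. c * (shuffle_sign (S - A) A * b (S - A) * a A))"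
      unfolding fwedge_eq[of a] if_P[OF fin] by (intro sum.cong) auto
    then show ?thesis
      using ba by (simp add: fscale_def sum_distrib_left)
  qed
qed

lemma fwedge_commute_even:
  assumes "\<And>A. a A \<noteq> 0 \<Longrightarrow> even (card A)"
  shows "fwedge a b = fwedge b a"
  using fwedge_commute_graded[of a b 1] assms by (auto simp: fscale_def)

lemma horiz_2form_fwedge_commute: "horiz_2form a \<Longrightarrow> fwedge a b = fwedge b a"
  by (rule fwedge_commute_even) (auto simp: horiz_2form_def)

lemma fwedge_dx_anticommute: "fwedge (dx i) (dx j) = fneg (fwedge (dx j) (dx i))"
proof -
  have "fwedge (dx i) (dx j) = fscale (-1) (fwedge (dx j) (dx i))"
    by (rule fwedge_commute_graded) (auto simp: dx_def split: if_splits)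
  then show ?thesis by (simp add: fscale_def fneg_def)
qed

lemma fwedge_dx_self: "fwedge (dx i) (dx i) = fzero"
  using fwedge_dx_anticommute[of i i] by (auto simp: fneg_def fzero_def fun_eq_iff)

lemma fwedge_fadd_left: "fwedge (fadd a b) c = fadd (fwedge a c) (fwedge b c)"
  by (rule ext) (simp add: fwedge_eq fadd_def sum.distrib algebra_simps)

lemma fwedge_fadd_right: "fwedge c (fadd a b) = fadd (fwedge c a) (fwedge c b)"
  by (rule ext) (simp add: fwedge_eq fadd_def sum.distrib algebra_simps)

lemma fwedge_fneg_left: "fwedge (fneg a) c = fneg (fwedge a c)"
  by (rule ext) (simp add: fwedge_eq fneg_def sum_negf)

lemma fwedge_fneg_right: "fwedge c (fneg a) = fneg (fwedge c a)"
  by (rule ext) (simp add: fwedge_eq fneg_def sum_negf)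

lemma fwedge_fscale_left: "fwedge (fscale r a) c = fscale r (fwedge a c)"
  by (rule ext) (simp add: fwedge_eq fscale_def sum_distrib_left algebra_simps)

lemma fwedge_fscale_right: "fwedge c (fscale r a) = fscale r (fwedge c a)"
  by (rule ext) (simp add: fwedge_eq fscale_def sum_distrib_left algebra_simps)

lemma fwedge_fzero_left: "fwedge fzero c = fzero"
  by (rule ext) (simp add: fwedge_eq fzero_def)

lemma fwedge_fzero_right: "fwedge c fzero = fzero"
  by (rule ext) (simp add: fwedge_eq fzero_def)

lemma fsum_lessThan_3: "fsum f {..<3::nat} = fadd (fadd (f 0) (f 1)) (f 2)"
  by (rule ext) (simp add: fsum_def fadd_def lessThan_Suc eval_nat_numeral)

lemma fsum_lessThan_7:
  "fsum f {..<7::nat} = fadd (fadd (fadd (fadd (fadd (fadd (f 0) (f 1)) (f 2)) (f 3)) (f 4)) (f 5)) (f 6)"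
  by (rule ext) (simp add: fsum_def fadd_def lessThan_Suc eval_nat_numeral)

lemma fwedge_dx_reorder: "j < i \<Longrightarrow> fwedge (dx i) (dx j) = fneg (fwedge (dx j) (dx i))"
  by (rule fwedge_dx_anticommute)

lemma fwedge_fwedge_dx_reorder:
  "j < i \<Longrightarrow> fwedge (fwedge x (dx i)) (dx j) = fneg (fwedge (fwedge x (dx j)) (dx i))"
  by (simp only: fwedge_assoc fwedge_dx_anticommute[of i j] fwedge_fneg_right)

lemma fwedge_fwedge_dx_self: "fwedge (fwedge x (dx i)) (dx i) = fzero"
  by (simp add: fwedge_assoc fwedge_dx_self fwedge_fzero_right)

text \<open>Rewriting with these rules brings a polynomial in the \<open>dx i\<close> to a normal form:
products left-associated with strictly increasing indices.\<close>

lemmas fwedge_normalize = fwedge_fadd_left fwedge_fadd_right fwedge_fneg_left fwedge_fneg_right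
  fwedge_fscale_left fwedge_fscale_right fwedge_fzero_left fwedge_fzero_right
  fsum_lessThan_3 fsum_lessThan_7 fwedge_assoc[symmetric]
  fwedge_dx_reorder fwedge_fwedge_dx_reorder fwedge_dx_self fwedge_fwedge_dx_self

lemmas block_matrix_defs = FA_def Qminus_def Qplus_def Qzero_def blk_def blkidx_def rowb_def colb_def
  vscale_def mscale_def mneg_def mzero_def madd_def mwedge3_def bracket_def cross_def vadd_def
  outer_def mscale7_def Let_def ev_def Jev_def e0_def trw_def

lemma trFQ_madd7: "trFQ \<alpha> \<beta> (madd7 X Y) = fadd (trFQ \<alpha> \<beta> X) (trFQ \<alpha> \<beta> Y)"
  by (simp add: trFQ_def trw_def madd7_def fwedge_normalize) (simp add: fadd_def algebra_simps)

lemma trFQ_mscale7: "trFQ \<alpha> \<beta> (mscale7 c X) = fscale c (trFQ \<alpha> \<beta> X)"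
  by (simp add: trFQ_def trw_def mscale7_def fwedge_normalize)
    (simp add: fadd_def fscale_def algebra_simps)

definition bianchi_e :: "fmat \<Rightarrow> fmat \<Rightarrow> fvec" where
  "bianchi_e \<alpha> \<beta> i = fsum (\<lambda>j. fadd (fwedge (\<alpha> i j) (ev j)) (fwedge (\<beta> i j) (Jev j))) {..<3}"

definition bianchi_Je :: "fmat \<Rightarrow> fmat \<Rightarrow> fvec" where
  "bianchi_Je \<alpha> \<beta> i = fsum (\<lambda>j. fadd (fwedge (\<beta> i j) (ev j)) (fneg (fwedge (\<alpha> i j) (Jev j)))) {..<3}"

definition bianchi_pairing :: "fmat \<Rightarrow> fmat \<Rightarrow> form" where
  "bianchi_pairing \<alpha> \<beta> =
     fsum (\<lambda>i. fadd (fwedge (bianchi_Je \<alpha> \<beta> i) (Jev i)) (fneg (fwedge (bianchi_e \<alpha> \<beta> i) (ev i)))) {..<3}"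

lemma bianchi_pairing_eq_zero:
  assumes "\<And>i. i < 3 \<Longrightarrow> bianchi_e \<alpha> \<beta> i = fzero" "\<And>i. i < 3 \<Longrightarrow> bianchi_Je \<alpha> \<beta> i = fzero"
  shows "bianchi_pairing \<alpha> \<beta> = fzero"
  using assms by (simp add: bianchi_pairing_def fsum_lessThan_3 fwedge_fzero_left)
    (simp add: fadd_def fneg_def fzero_def)

context
  fixes \<alpha> \<beta> :: fmat
  assumes horiz: "\<And>i j. i < 3 \<Longrightarrow> j < 3 \<Longrightarrow> horiz_2form (\<alpha> i j) \<and> horiz_2form (\<beta> i j)"
begin

private lemma fwedge_curvature_commute:
  "i < 3 \<Longrightarrow> j < 3 \<Longrightarrow> fwedge q (\<alpha> i j) = fwedge (\<alpha> i j) q"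
  "i < 3 \<Longrightarrow> j < 3 \<Longrightarrow> fwedge q (\<beta> i j) = fwedge (\<beta> i j) q"
  using horiz horiz_2form_fwedge_commute by metis+

lemma trFQ_Qminus: "trFQ \<alpha> \<beta> (Qminus \<delta>) = fzero"
  by (simp add: trFQ_def block_matrix_defs fwedge_normalize fwedge_curvature_commute)
    (simp add: fun_eq_iff fadd_def fneg_def fscale_def fzero_def algebra_simps)

lemma trFQ_Qplus: "trFQ \<alpha> \<beta> (Qplus \<delta>) = fscale (2 * (1 + \<delta>)) (bianchi_pairing \<alpha> \<beta>)"
  by (simp add: trFQ_def bianchi_pairing_def bianchi_e_def bianchi_Je_def block_matrix_defs
      fwedge_normalize fwedge_curvature_commute)
    (simp add: fun_eq_iff fadd_def fneg_def fscale_def fzero_def algebra_simps)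

lemma trFQ_Qzero:
  "trFQ \<alpha> \<beta> Qzero = fadd (fscale 4 (bianchi_pairing \<alpha> \<beta>))
     (fscale (-8) (fwedge (fsum (\<lambda>i. \<beta> i i) {..<3}) (fsum (\<lambda>l. fwedge (ev l) (Jev l)) {..<3})))"
  by (simp add: trFQ_def bianchi_pairing_def bianchi_e_def bianchi_Je_def block_matrix_defs
      fwedge_normalize fwedge_curvature_commute)
    (simp add: fun_eq_iff fadd_def fneg_def fscale_def fzero_def algebra_simps)

end

theorem mainTheorem10:
  fixes \<alpha> \<beta> :: fmat
  assumes horiz: "\<forall>i<3. \<forall>j<3. horiz_2form (\<alpha> i j) \<and> horiz_2form (\<beta> i j)"
    and skew: "\<forall>i<3. \<forall>j<3. \<alpha> j i = fneg (\<alpha> i j)"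
    and symm: "\<forall>i<3. \<forall>j<3. \<beta> j i = \<beta> i j"
    and traceless: "fsum (\<lambda>i. \<beta> i i) {..<3} = fzero"
    and bianchi1: "\<forall>i<3. fsum (\<lambda>j. fadd (fwedge (\<alpha> i j) (ev j)) (fwedge (\<beta> i j) (Jev j))) {..<3} = fzero"
    and bianchi2: "\<forall>i<3. fsum (\<lambda>j. fadd (fwedge (\<beta> i j) (ev j)) (fneg (fwedge (\<alpha> i j) (Jev j)))) {..<3} = fzero"
  shows "(\<forall>\<delta>::real. trFQ \<alpha> \<beta> (Qminus \<delta>) = fzero \<and> trFQ \<alpha> \<beta> (Qplus \<delta>) = fzero)
         \<and> trFQ \<alpha> \<beta> Qzero = fzero
         \<and> (\<forall>\<delta> m::real. trFQ \<alpha> \<beta> (Qm \<delta> m) = fzero)"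
proof -
  have horiz': "\<And>i j. i < 3 \<Longrightarrow> j < 3 \<Longrightarrow> horiz_2form (\<alpha> i j) \<and> horiz_2form (\<beta> i j)"
    using horiz by blast
  have pairing: "bianchi_pairing \<alpha> \<beta> = fzero"
    using bianchi1 bianchi2 by (intro bianchi_pairing_eq_zero) (simp_all add: bianchi_e_def bianchi_Je_def)
  have minus: "trFQ \<alpha> \<beta> (Qminus \<delta>) = fzero" for \<delta>
    using trFQ_Qminus[OF horiz'] .
  have plus: "trFQ \<alpha> \<beta> (Qplus \<delta>) = fzero" for \<delta>
    using trFQ_Qplus[OF horiz'] pairing by (simp add: fscale_def fzero_def)
  have zero: "trFQ \<alpha> \<beta> Qzero = fzero"
    using trFQ_Qzero[OF horiz'] pairing traceless
    by (simp add: fwedge_fzero_left) (simp add: fscale_def fzero_def fadd_def)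
  have "trFQ \<alpha> \<beta> (Qm \<delta> m) = fzero" for \<delta> m
    by (simp add: Qm_def trFQ_madd7 trFQ_mscale7 minus plus zero) (simp add: fadd_def fscale_def fzero_def)
  with minus plus zero show ?thesis by blast
qed

end
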